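(* Let $\rho=(r_n)_{n\in\omega}$ be a sequence of positive integers with $r_0=1$ and $r_n\mid r_{n+1}$ for all $n$. Let $G$ be a torsion-free abelian group with $G_\rho:=\bigcap_{n\in\omega}Gr_n=0$. Then $\mathrm{Ext}(\mathbb{Z}_{(\rho)},G)=0$ if and only if $G$ is complete in the $\rho$-topology.
   Context: $\mathbb{Z}_{(\rho)}=\langle 1/r_n:n\in\omega\rangle\subseteq\mathbb{Q}$ is the subgroup of $\mathbb{Q}$ generated by the $1/r_n$. The $\rho$-topology on $G$ is the group topology with basis of neighbourhoods of $0$ the subgroups $Gr_n$ $(n\in\omega)$; it is Hausdorff iff $G_\rho=0$. $G$ is complete in the $\rho$-topology if every Cauchy sequence in this topology converges in $G$. *)

theory Defs
  imports "HOL-Algebra.Algebra"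
begin

text \<open>Abelian groups are HOL-Algebra (multiplicatively written) commutative groups.\<close>

definition rat_add_group :: "rat monoid" where
  "rat_add_group = \<lparr>carrier = UNIV, monoid.mult = (+), one = 0\<rparr>"

definition Zrho :: "(nat \<Rightarrow> nat) \<Rightarrow> rat monoid" where
  "Zrho r = rat_add_group\<lparr>carrier := generate rat_add_group (range (\<lambda>n. 1 / of_nat (r n)))\<rparr>"

text \<open>The subgroup G r_n = {x^k | x in G} (written additively in the paper as G k).\<close>
definition mult_sub :: "('g, 'b) monoid_scheme \<Rightarrow> nat \<Rightarrow> 'g set" where
  "mult_sub G k = {x [^]\<^bsub>G\<^esub> k | x. x \<in> carrier G}"

definition torsion_free :: "('g, 'b) monoid_scheme \<Rightarrow> bool" where
  "torsion_free G \<longleftrightarrow> (\<forall>x\<in>carrier G. \<forall>n::nat. n > 0 \<and> x [^]\<^bsub>G\<^esub> n = \<one>\<^bsub>G\<^esub> \<longrightarrow> x = \<one>\<^bsub>G\<^esub>)"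

text \<open>Cauchy sequences and convergence in the rho-topology (basis of neighbourhoods
  of the identity: the subgroups G r_n).\<close>
definition rho_cauchy :: "('g, 'b) monoid_scheme \<Rightarrow> (nat \<Rightarrow> nat) \<Rightarrow> (nat \<Rightarrow> 'g) \<Rightarrow> bool" where
  "rho_cauchy G r x \<longleftrightarrow> (\<forall>n. \<exists>N. \<forall>i\<ge>N. \<forall>j\<ge>N. x i \<otimes>\<^bsub>G\<^esub> inv\<^bsub>G\<^esub> (x j) \<in> mult_sub G (r n))"

definition rho_converges :: "('g, 'b) monoid_scheme \<Rightarrow> (nat \<Rightarrow> nat) \<Rightarrow> (nat \<Rightarrow> 'g) \<Rightarrow> 'g \<Rightarrow> bool" where
  "rho_converges G r x g \<longleftrightarrow> (\<forall>n. \<exists>N. \<forall>i\<ge>N. x i \<otimes>\<^bsub>G\<^esub> inv\<^bsub>G\<^esub> g \<in> mult_sub G (r n))"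

definition rho_complete :: "('g, 'b) monoid_scheme \<Rightarrow> (nat \<Rightarrow> nat) \<Rightarrow> bool" where
  "rho_complete G r \<longleftrightarrow> (\<forall>x. (\<forall>i. x i \<in> carrier G) \<and> rho_cauchy G r x \<longrightarrow>
      (\<exists>g\<in>carrier G. rho_converges G r x g))"

text \<open>Every extension is isomorphic to one whose underlying set is carrier G \<times> carrier A,
  so it suffices to let E range over groups carried by subsets of type 'g \<times> 'a.\<close>
definition ext_vanishes :: "('a, 'c) monoid_scheme \<Rightarrow> ('g, 'b) monoid_scheme \<Rightarrow> bool" where
  "ext_vanishes A G \<longleftrightarrow>
     (\<forall>(E :: ('g \<times> 'a) monoid) i p.
        comm_group E \<and> i \<in> hom G E \<and> inj_on i (carrier G) \<and>
        p \<in> hom E A \<and> p ` carrier E = carrier A \<and> i ` carrier G = kernel E A p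
        \<longrightarrow> (\<exists>s \<in> hom A E. \<forall>a\<in>carrier A. p (s a) = a))"

end

theory Submission
  imports Defs
begin

text \<open>
  \<open>Z\<^sub>\<rho>\<close> is the union of the cyclic groups \<open>(1/r\<^sub>n)Z\<close>, i.e. the direct limit of
  \<open>Z \<rightarrow> Z \<rightarrow> \<dots>\<close> along multiplication by \<open>k\<^sub>n = r\<^sub>n\<^sub>+\<^sub>1 / r\<^sub>n\<close>. In an extension
  \<open>E\<close> of \<open>Z\<^sub>\<rho>\<close> by \<open>G\<close>, lifts \<open>y\<^sub>n\<close> of \<open>1/r\<^sub>n\<close> satisfy \<open>k\<^sub>n y\<^sub>n\<^sub>+\<^sub>1 = g\<^sub>n + y\<^sub>n\<close> for some
  \<open>g\<^sub>n \<in> G\<close>, and \<open>E\<close> splits iff the chain equations \<open>w\<^sub>n = g\<^sub>n + k\<^sub>n w\<^sub>n\<^sub>+\<^sub>1\<close> have a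
  solution in \<open>G\<close> (then the \<open>w\<^sub>n + y\<^sub>n\<close> are compatible lifts). Every sequence \<open>g\<close> occurs,
  namely in \<open>G \<times> Z\<^sub>\<rho>\<close> twisted by the coboundary of the formal sum \<open>q \<mapsto> \<Sum>\<^sub>j (q r\<^sub>j) g\<^sub>j\<close>.
  Hence \<open>Ext(Z\<^sub>\<rho>, G) = 0\<close> iff all chain equations are solvable.

  Solvability is equivalent to completeness. A Cauchy sequence thins out to \<open>y\<close> with
  \<open>y\<^sub>n\<^sub>+\<^sub>1 - y\<^sub>n = r\<^sub>n g\<^sub>n\<close>, and for a solution \<open>w\<close> the sequence \<open>y\<^sub>n + r\<^sub>n w\<^sub>n\<close> is constant, hence
  a limit. Conversely, if \<open>L\<close> is the limit of the partial sums of \<open>\<Sum>\<^sub>j r\<^sub>j g\<^sub>j\<close>, then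
  \<open>L - \<Sum>\<^sub>j\<^sub><\<^sub>n r\<^sub>j g\<^sub>j = r\<^sub>n w\<^sub>n\<close>, and as \<open>G\<close> is torsion-free these \<open>w\<^sub>n\<close> solve the chain
  equations.
\<close>

section \<open>\<open>Z\<^sub>\<rho>\<close> as a union of cyclic groups\<close>

lemma rat_add_comm_group: "comm_group rat_add_group"
  by (rule comm_groupI) (auto simp: rat_add_group_def intro: exI[of _ "-x" for x])

lemma Zrho_simps [simp]:
  "x \<otimes>\<^bsub>Zrho r\<^esub> y = x + y" "\<one>\<^bsub>Zrho r\<^esub> = 0"
  by (auto simp: Zrho_def rat_add_group_def)

lemma Zrho_comm_group: "comm_group (Zrho r)"
proof -
  interpret comm_group rat_add_group by (rule rat_add_comm_group)
  have "subgroup (carrier (Zrho r)) rat_add_group"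
    unfolding Zrho_def by (simp, rule generate_is_subgroup) (simp add: rat_add_group_def)
  then have "group (Zrho r)"
    using subgroup.subgroup_is_group is_group by (fastforce simp: Zrho_def)
  then show ?thesis by (rule group.group_comm_groupI) auto
qed

interpretation Zrho: comm_group "Zrho r"
  by (rule Zrho_comm_group)

lemma Zrho_inv: "x \<in> carrier (Zrho r) \<Longrightarrow> inv\<^bsub>Zrho r\<^esub> x = - x"
  by (metis Zrho.inv_closed Zrho.r_inv Zrho_simps add.right_inverse add_left_cancel)

lemma Zrho_nat_pow: "x [^]\<^bsub>Zrho r\<^esub> (n::nat) = of_nat n * x"
  by (induction n) (auto simp: algebra_simps)

lemma Zrho_int_pow:
  assumes "x \<in> carrier (Zrho r)"
  shows "x [^]\<^bsub>Zrho r\<^esub> (k::int) = of_int k * x"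
proof (cases k rule: int_cases2)
  case (nonneg n)
  then show ?thesis by (simp add: int_pow_int Zrho_nat_pow)
next
  case (nonpos n)
  have "of_nat n * x \<in> carrier (Zrho r)"
    using Zrho.nat_pow_closed[OF assms] by (simp add: Zrho_nat_pow)
  with nonpos assms show ?thesis
    by (simp add: Zrho.int_pow_neg_int Zrho_nat_pow Zrho_inv)
qed

lemma inverse_r_in_Zrho: "1 / of_nat (r n) \<in> carrier (Zrho r)"
  by (auto simp: Zrho_def intro: generate.incl)

definition rho_level :: "(nat \<Rightarrow> nat) \<Rightarrow> nat \<Rightarrow> rat set" where
  "rho_level r N = {q. q * of_nat (r N) \<in> \<int>}"

definition rho_coord :: "(nat \<Rightarrow> nat) \<Rightarrow> rat \<Rightarrow> nat \<Rightarrow> int" where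
  "rho_coord r q j = (if q \<in> rho_level r j then \<lfloor>q * of_nat (r j)\<rfloor> else 0)"

definition rho_ratio :: "(nat \<Rightarrow> nat) \<Rightarrow> nat \<Rightarrow> nat" where
  "rho_ratio r n = r (Suc n) div r n"

lemma rho_level_add: "q \<in> rho_level r N \<Longrightarrow> q' \<in> rho_level r N \<Longrightarrow> q + q' \<in> rho_level r N"
  by (simp add: rho_level_def distrib_right)

lemma rho_level_of_nat_mult: "q \<in> rho_level r N \<Longrightarrow> of_nat k * q \<in> rho_level r N"
  by (simp add: rho_level_def mult.assoc)

lemma rho_coord_eq: "q \<in> rho_level r j \<Longrightarrow> of_int (rho_coord r q j) = q * of_nat (r j)"
  by (auto simp: rho_coord_def rho_level_def elim: Ints_cases)

lemma rho_coord_add: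
  assumes "q \<in> rho_level r j" "q' \<in> rho_level r j"
  shows "rho_coord r (q + q') j = rho_coord r q j + rho_coord r q' j"
proof -
  have "(of_int (rho_coord r (q + q') j) :: rat) = of_int (rho_coord r q j + rho_coord r q' j)"
    using assms rho_level_add[OF assms] by (simp add: rho_coord_eq distrib_right)
  then show ?thesis by (simp only: of_int_eq_iff)
qed

lemma rho_coord_zero [simp]: "rho_coord r 0 = (\<lambda>_. 0)"
  by (simp add: rho_coord_def fun_eq_iff)

locale divisor_chain =
  fixes r :: "nat \<Rightarrow> nat"
  assumes r_pos: "0 < r n" and r_dvd_Suc: "r n dvd r (Suc n)"
begin

lemma r_dvd_mono: "n \<le> m \<Longrightarrow> r n dvd r m"
  by (induction m rule: dec_induct) (auto elim: dvd_trans[OF _ r_dvd_Suc])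

lemma r_Suc_eq: "r (Suc n) = r n * rho_ratio r n"
  using r_dvd_Suc by (simp add: rho_ratio_def)

lemma rho_ratio_pos: "0 < rho_ratio r n"
  using r_Suc_eq[of n] r_pos[of "Suc n"] by (simp add: nat_0_less_mult_iff)

lemma rho_level_mono: "N \<le> M \<Longrightarrow> rho_level r N \<subseteq> rho_level r M"
proof
  fix q assume "N \<le> M" "q \<in> rho_level r N"
  obtain c where "r M = r N * c" using r_dvd_mono[OF \<open>N \<le> M\<close>] by blast
  then have "q * of_nat (r M) = q * of_nat (r N) * of_nat c" by (simp add: mult.assoc)
  then show "q \<in> rho_level r M"
    using \<open>q \<in> rho_level r N\<close> unfolding rho_level_def by (metis Ints_mult Ints_of_nat mem_Collect_eq)
qed

lemma inverse_r_in_rho_level: "1 / of_nat (r n) \<in> rho_level r n"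
  using r_pos[of n] by (simp add: rho_level_def)

lemma carrier_Zrho: "carrier (Zrho r) = (\<Union>N. rho_level r N)"
proof
  show "carrier (Zrho r) \<subseteq> (\<Union>N. rho_level r N)"
    unfolding Zrho_def
  proof (clarsimp)
    fix q assume "q \<in> generate rat_add_group (range (\<lambda>n. 1 / of_nat (r n)))"
    then show "\<exists>N. q \<in> rho_level r N"
    proof (induction q rule: generate.induct)
      case one
      then show ?case by (simp add: rat_add_group_def rho_level_def)
    next
      case (incl h)
      then show ?case using inverse_r_in_rho_level by auto
    next
      case (inv h)
      then obtain n where "h = 1 / of_nat (r n)" by auto
      moreover have "inv\<^bsub>rat_add_group\<^esub> h = - h"
        by (rule group.inv_equality[OF comm_group.axioms(2)[OF rat_add_comm_group]])
           (simp_all add: rat_add_group_def)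
      ultimately show ?case using r_pos[of n] by (auto simp: rho_level_def intro!: exI[of _ n])
    next
      case (eng h h')
      then obtain N N' where "h \<in> rho_level r N" "h' \<in> rho_level r N'" by blast
      then have "h \<in> rho_level r (max N N')" "h' \<in> rho_level r (max N N')"
        using rho_level_mono[of N "max N N'"] rho_level_mono[of N' "max N N'"] by auto
      then show ?case by (auto simp: rat_add_group_def intro: rho_level_add)
    qed
  qed
  show "(\<Union>N. rho_level r N) \<subseteq> carrier (Zrho r)"
  proof clarify
    fix q N assume "q \<in> rho_level r N"
    then have "q = (1 / of_nat (r N)) [^]\<^bsub>Zrho r\<^esub> rho_coord r q N"
      using r_pos[of N] by (simp add: Zrho_int_pow inverse_r_in_Zrho rho_coord_eq)
    then show "q \<in> carrier (Zrho r)"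
      by (metis Zrho.int_pow_closed inverse_r_in_Zrho)
  qed
qed

lemma common_level:
  assumes "finite Q" "Q \<subseteq> carrier (Zrho r)"
  obtains M where "Q \<subseteq> rho_level r M"
proof -
  have "\<exists>M. Q \<subseteq> rho_level r M"
    using assms
  proof (induction Q rule: finite_induct)
    case (insert q Q)
    then obtain M N where "Q \<subseteq> rho_level r M" "q \<in> rho_level r N"
      by (auto simp: carrier_Zrho)
    then have "insert q Q \<subseteq> rho_level r (max M N)"
      using rho_level_mono[of M "max M N"] rho_level_mono[of N "max M N"] by auto
    then show ?case by blast
  qed simp
  then show ?thesis using that by blast
qed

lemma rho_coord_Suc:
  assumes "q \<in> rho_level r M"
  shows "rho_coord r q (Suc M) = int (rho_ratio r M) * rho_coord r q M"
proof -
  have "q \<in> rho_level r (Suc M)" using assms rho_level_mono[of M "Suc M"] by auto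
  then have "(of_int (rho_coord r q (Suc M)) :: rat) = q * of_nat (r M) * of_nat (rho_ratio r M)"
    by (simp add: rho_coord_eq r_Suc_eq mult.assoc)
  also have "\<dots> = of_int (int (rho_ratio r M) * rho_coord r q M)"
    using rho_coord_eq[OF assms] by simp
  finally show ?thesis by (simp only: of_int_eq_iff)
qed

lemma rho_coord_inverse_r: "rho_coord r (1 / of_nat (r n)) n = 1"
  using rho_coord_eq[OF inverse_r_in_rho_level, of n] r_pos[of n] by simp

lemma ratio_div_r_Suc: "of_nat (rho_ratio r n) / of_nat (r (Suc n)) = (1 / of_nat (r n) :: rat)"
  using r_pos[of n] rho_ratio_pos[of n] by (simp add: r_Suc_eq)

lemma Zrho_hom_of_compatible:
  assumes "group H"
    and z_closed: "\<And>n. z n \<in> carrier H"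
    and z_compat: "\<And>n. z (Suc n) [^]\<^bsub>H\<^esub> rho_ratio r n = z n"
  shows "\<exists>s \<in> hom (Zrho r) H. \<forall>M. \<forall>q \<in> rho_level r M. s q = z M [^]\<^bsub>H\<^esub> rho_coord r q M"
proof -
  interpret H: group H by (rule assms(1))
  define V where "V q M = z M [^]\<^bsub>H\<^esub> rho_coord r q M" for q M
  have V_Suc: "V q (Suc M) = V q M" if "q \<in> rho_level r M" for q M
    using that z_closed
    by (simp add: V_def rho_coord_Suc H.int_pow_pow[symmetric] int_pow_int z_compat)
  have V_stable: "V q M' = V q M" if "q \<in> rho_level r M" "M \<le> M'" for q M M'
    using that(2)
  proof (induction M' rule: dec_induct)
    case (step m)
    then show ?case using V_Suc rho_level_mono[of M m] that(1) by auto
  qed simp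
  define s where "s q = V q (SOME M. q \<in> rho_level r M)" for q
  have s_eq: "s q = V q M" if "q \<in> rho_level r M" for q M
  proof -
    let ?M = "SOME M. q \<in> rho_level r M"
    have "q \<in> rho_level r ?M" using that by (rule someI)
    then have "s q = V q (max M ?M)" unfolding s_def by (rule V_stable[symmetric]) simp
    also have "\<dots> = V q M" using that by (rule V_stable) simp
    finally show ?thesis .
  qed
  have "s \<in> hom (Zrho r) H"
  proof (rule homI)
    fix q assume "q \<in> carrier (Zrho r)"
    then obtain M where "q \<in> rho_level r M" by (auto simp: carrier_Zrho)
    then show "s q \<in> carrier H" using z_closed by (simp add: s_eq V_def)
  next
    fix q q' assume qq': "q \<in> carrier (Zrho r)" "q' \<in> carrier (Zrho r)"
    obtain M where "{q, q'} \<subseteq> rho_level r M"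
      by (rule common_level[of "{q, q'}"]) (use qq' in auto)
    then have q: "q \<in> rho_level r M" and q': "q' \<in> rho_level r M" by auto
    then show "s (q \<otimes>\<^bsub>Zrho r\<^esub> q') = s q \<otimes>\<^bsub>H\<^esub> s q'"
      using z_closed s_eq[OF rho_level_add[OF q q']]
      by (simp add: s_eq V_def rho_coord_add H.int_pow_mult)
  qed
  then show ?thesis using s_eq unfolding V_def by blast
qed

end

section \<open>Power products and cocycle extensions\<close>

definition pow_prod :: "('g, 'b) monoid_scheme \<Rightarrow> (nat \<Rightarrow> 'g) \<Rightarrow> (nat \<Rightarrow> int) \<Rightarrow> nat \<Rightarrow> 'g" where
  "pow_prod G g f M = (\<Otimes>\<^bsub>G\<^esub>j\<in>{..<M}. g j [^]\<^bsub>G\<^esub> f j)"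

context comm_group
begin

context
  fixes g :: "nat \<Rightarrow> 'a"
  assumes g_closed: "\<And>j. g j \<in> carrier G"
begin

lemma pow_prod_closed [simp]: "pow_prod G g f M \<in> carrier G"
  unfolding pow_prod_def by (rule finprod_closed) (simp add: g_closed)

lemma pow_prod_0 [simp]: "pow_prod G g f 0 = \<one>"
  by (simp add: pow_prod_def)

lemma pow_prod_Suc: "pow_prod G g f (Suc M) = g M [^] f M \<otimes> pow_prod G g f M"
  unfolding pow_prod_def lessThan_Suc by (subst finprod_insert) (auto simp: g_closed)

lemma pow_prod_add: "pow_prod G g (\<lambda>j. f j + f' j) M = pow_prod G g f M \<otimes> pow_prod G g f' M"
  by (induction M) (simp_all add: pow_prod_Suc int_pow_mult g_closed m_ac)

lemma pow_prod_zero: "pow_prod G g (\<lambda>_. 0) M = \<one>"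
  by (induction M) (simp_all add: pow_prod_Suc g_closed)

lemma pow_prod_stable:
  assumes "\<And>j. M \<le> j \<Longrightarrow> f j = 0" "M \<le> M'"
  shows "pow_prod G g f M' = pow_prod G g f M"
  using assms(2) by (induction M' rule: dec_induct) (simp_all add: pow_prod_Suc g_closed assms(1))

end

end

definition cocycle_ext :: "('g, 'b) monoid_scheme \<Rightarrow> ('a, 'c) monoid_scheme \<Rightarrow> ('a \<Rightarrow> 'a \<Rightarrow> 'g) \<Rightarrow> ('g \<times> 'a) monoid" where
  "cocycle_ext G A f =
     \<lparr>carrier = carrier G \<times> carrier A,
      monoid.mult = (\<lambda>(a, q) (b, q'). (a \<otimes>\<^bsub>G\<^esub> b \<otimes>\<^bsub>G\<^esub> f q q', q \<otimes>\<^bsub>A\<^esub> q')),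
      one = (\<one>\<^bsub>G\<^esub>, \<one>\<^bsub>A\<^esub>)\<rparr>"

locale symmetric_cocycle = comm_group G + A: comm_group A
  for G :: "('g, 'b) monoid_scheme" (structure) and A :: "('a, 'c) monoid_scheme" +
  fixes f :: "'a \<Rightarrow> 'a \<Rightarrow> 'g"
  assumes cocycle_closed: "q \<in> carrier A \<Longrightarrow> q' \<in> carrier A \<Longrightarrow> f q q' \<in> carrier G"
    and cocycle_comm: "q \<in> carrier A \<Longrightarrow> q' \<in> carrier A \<Longrightarrow> f q q' = f q' q"
    and cocycle_one: "q \<in> carrier A \<Longrightarrow> f \<one>\<^bsub>A\<^esub> q = \<one>"
    and cocycle_assoc: "q \<in> carrier A \<Longrightarrow> q' \<in> carrier A \<Longrightarrow> q'' \<in> carrier A \<Longrightarrow>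
      f q q' \<otimes> f (q \<otimes>\<^bsub>A\<^esub> q') q'' = f q' q'' \<otimes> f q (q' \<otimes>\<^bsub>A\<^esub> q'')"
begin

lemma cocycle_one_right: "q \<in> carrier A \<Longrightarrow> f q \<one>\<^bsub>A\<^esub> = \<one>"
  using cocycle_comm cocycle_one by simp

lemma cocycle_ext_comm_group: "comm_group (cocycle_ext G A f)"
proof (rule comm_groupI)
  fix x y z
  assume "x \<in> carrier (cocycle_ext G A f)" "y \<in> carrier (cocycle_ext G A f)"
    "z \<in> carrier (cocycle_ext G A f)"
  then obtain a b c q q' q'' where xyz: "x = (a, q)" "y = (b, q')" "z = (c, q'')"
    and closed: "a \<in> carrier G" "b \<in> carrier G" "c \<in> carrier G"
      "q \<in> carrier A" "q' \<in> carrier A" "q'' \<in> carrier A"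
    by (auto simp: cocycle_ext_def)
  have "a \<otimes> b \<otimes> f q q' \<otimes> c \<otimes> f (q \<otimes>\<^bsub>A\<^esub> q') q''
      = a \<otimes> b \<otimes> c \<otimes> (f q q' \<otimes> f (q \<otimes>\<^bsub>A\<^esub> q') q'')"
    using closed by (simp add: cocycle_closed m_ac)
  also have "\<dots> = a \<otimes> (b \<otimes> c \<otimes> f q' q'') \<otimes> f q (q' \<otimes>\<^bsub>A\<^esub> q'')"
    using closed by (simp add: cocycle_assoc cocycle_closed m_ac)
  finally show "x \<otimes>\<^bsub>cocycle_ext G A f\<^esub> y \<otimes>\<^bsub>cocycle_ext G A f\<^esub> z =
      x \<otimes>\<^bsub>cocycle_ext G A f\<^esub> (y \<otimes>\<^bsub>cocycle_ext G A f\<^esub> z)"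
    using closed by (simp add: xyz cocycle_ext_def A.m_assoc)
next
  fix x assume "x \<in> carrier (cocycle_ext G A f)"
  then obtain a q where x: "x = (a, q)" "a \<in> carrier G" "q \<in> carrier A"
    by (auto simp: cocycle_ext_def)
  let ?y = "(inv a \<otimes> inv f (inv\<^bsub>A\<^esub> q) q, inv\<^bsub>A\<^esub> q)"
  have "?y \<in> carrier (cocycle_ext G A f) \<and> ?y \<otimes>\<^bsub>cocycle_ext G A f\<^esub> x = \<one>\<^bsub>cocycle_ext G A f\<^esub>"
    using x by (simp add: cocycle_ext_def cocycle_closed m_ac)
  then show "\<exists>y\<in>carrier (cocycle_ext G A f). y \<otimes>\<^bsub>cocycle_ext G A f\<^esub> x = \<one>\<^bsub>cocycle_ext G A f\<^esub>"
    by blast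
qed (auto simp: cocycle_ext_def cocycle_closed cocycle_one cocycle_one_right cocycle_comm m_ac A.m_comm)

lemma cocycle_ext_extension:
  shows "(\<lambda>a. (a, \<one>\<^bsub>A\<^esub>)) \<in> hom G (cocycle_ext G A f)"
    and "inj_on (\<lambda>a. (a, \<one>\<^bsub>A\<^esub>)) (carrier G)"
    and "snd \<in> hom (cocycle_ext G A f) A"
    and "snd ` carrier (cocycle_ext G A f) = carrier A"
    and "(\<lambda>a. (a, \<one>\<^bsub>A\<^esub>)) ` carrier G = kernel (cocycle_ext G A f) A snd"
  by (auto simp: cocycle_ext_def hom_def kernel_def cocycle_one inj_on_def image_iff)

end

section \<open>Completeness and the chain equations\<close>

lemma (in group) inv_mult_cancel_left [simp]:
  "x \<in> carrier G \<Longrightarrow> y \<in> carrier G \<Longrightarrow> inv x \<otimes> (x \<otimes> y) = y"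
  by (simp add: m_assoc[symmetric])

lemma (in group) mult_inv_cancel_left [simp]:
  "x \<in> carrier G \<Longrightarrow> y \<in> carrier G \<Longrightarrow> x \<otimes> (inv x \<otimes> y) = y"
  by (simp add: m_assoc[symmetric])

context comm_group
begin

lemma pow_in_mult_sub: "a \<in> carrier G \<Longrightarrow> a [^] k \<in> mult_sub G k"
  by (auto simp: mult_sub_def)

lemma mult_subE:
  assumes "y \<in> mult_sub G k"
  obtains x where "x \<in> carrier G" "x [^] k = y"
  using assms by (auto simp: mult_sub_def)

lemma mult_sub_subgroup: "subgroup (mult_sub G k) G"
proof (rule subgroupI)
  show "mult_sub G k \<subseteq> carrier G" by (auto simp: mult_sub_def)
  show "mult_sub G k \<noteq> {}" using pow_in_mult_sub[OF one_closed] by blast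
next
  fix a b assume "a \<in> mult_sub G k" "b \<in> mult_sub G k"
  then obtain x y where "x \<in> carrier G" "y \<in> carrier G" "a = x [^] k" "b = y [^] k"
    by (auto simp: mult_sub_def)
  then show "inv a \<in> mult_sub G k" "a \<otimes> b \<in> mult_sub G k"
    by (simp_all add: nat_pow_inv[symmetric] nat_pow_distrib[symmetric] pow_in_mult_sub)
qed

lemma mult_sub_antimono: "k dvd m \<Longrightarrow> mult_sub G m \<subseteq> mult_sub G k"
  by (auto simp: mult_sub_def nat_pow_pow[symmetric] mult.commute[of k] elim!: dvdE)

lemma torsion_free_pow_inj:
  assumes "torsion_free G" "a \<in> carrier G" "b \<in> carrier G" "0 < m" "a [^] (m::nat) = b [^] m"
  shows "a = b"
proof -
  have "(a \<otimes> inv b) [^] m = \<one>"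
    using assms(2-5) by (simp add: nat_pow_distrib nat_pow_inv)
  then have "a \<otimes> inv b = \<one>"
    using assms(1-4) unfolding torsion_free_def by blast
  then show ?thesis using assms(2,3) inv_solve_right'[of \<one> a b] by simp
qed

end

text \<open>Vanishing of \<open>lim\<^sup>1\<close> of the tower \<open>G \<leftarrow> G \<leftarrow> \<dots>\<close> with maps \<open>k\<^sub>n = r\<^sub>n\<^sub>+\<^sub>1 / r\<^sub>n\<close>.\<close>

definition rho_chain_solvable :: "('g, 'b) monoid_scheme \<Rightarrow> (nat \<Rightarrow> nat) \<Rightarrow> bool" where
  "rho_chain_solvable G r \<longleftrightarrow> (\<forall>g. (\<forall>n. g n \<in> carrier G) \<longrightarrow>
     (\<exists>w. (\<forall>n. w n \<in> carrier G) \<and> (\<forall>n. w n = g n \<otimes>\<^bsub>G\<^esub> w (Suc n) [^]\<^bsub>G\<^esub> rho_ratio r n)))"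

locale rho_group = divisor_chain r + comm_group G
  for r :: "nat \<Rightarrow> nat" and G :: "('g, 'b) monoid_scheme" (structure)
begin

lemmas mult_sub_mult = subgroup.m_closed[OF mult_sub_subgroup]
  and mult_sub_inv = subgroup.m_inv_closed[OF mult_sub_subgroup]

lemma mult_sub_r_antimono: "n \<le> m \<Longrightarrow> mult_sub G (r m) \<subseteq> mult_sub G (r n)"
  by (simp add: mult_sub_antimono r_dvd_mono)

context
  fixes x :: "nat \<Rightarrow> 'g"
  assumes x_closed: "\<And>n. x n \<in> carrier G"
    and x_steps: "\<And>n. x (Suc n) \<otimes> inv x n \<in> mult_sub G (r n)"
begin

lemma rho_tail_if_steps: "n \<le> m \<Longrightarrow> x m \<otimes> inv x n \<in> mult_sub G (r n)"
proof (induction m rule: dec_induct)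
  case base
  then show ?case using x_closed subgroup.one_closed[OF mult_sub_subgroup] by simp
next
  case (step m)
  have "x (Suc m) \<otimes> inv x m \<in> mult_sub G (r n)"
    using x_steps mult_sub_r_antimono[OF \<open>n \<le> m\<close>] by blast
  then have "(x (Suc m) \<otimes> inv x m) \<otimes> (x m \<otimes> inv x n) \<in> mult_sub G (r n)"
    using step.IH by (rule mult_sub_mult)
  then show ?case using x_closed by (simp add: m_assoc)
qed

lemma rho_cauchy_if_steps: "rho_cauchy G r x"
  unfolding rho_cauchy_def
proof (intro allI exI impI)
  fix n i j :: nat assume "n \<le> i" "n \<le> j"
  then have "(x i \<otimes> inv x n) \<otimes> inv (x j \<otimes> inv x n) \<in> mult_sub G (r n)"
    by (intro mult_sub_mult mult_sub_inv rho_tail_if_steps)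
  then show "x i \<otimes> inv x j \<in> mult_sub G (r n)"
    using x_closed by (simp add: inv_mult_group m_assoc)
qed

lemma rho_limit_tail:
  assumes "L \<in> carrier G" "rho_converges G r x L"
  shows "L \<otimes> inv x n \<in> mult_sub G (r n)"
proof -
  obtain N where N: "\<And>i. N \<le> i \<Longrightarrow> x i \<otimes> inv L \<in> mult_sub G (r n)"
    using assms(2) unfolding rho_converges_def by blast
  define m where "m = max n N"
  have "inv (x m \<otimes> inv L) \<otimes> (x m \<otimes> inv x n) \<in> mult_sub G (r n)"
    unfolding m_def by (intro mult_sub_mult mult_sub_inv N rho_tail_if_steps) simp_all
  then show ?thesis
    using x_closed assms(1) by (simp add: inv_mult_group m_assoc)
qed

end

lemma rho_cauchy_fast_subseq:
  assumes "rho_cauchy G r x"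
  obtains M where "\<And>n. M n \<le> M (Suc n)"
    and "\<And>n i. M n \<le> i \<Longrightarrow> x i \<otimes> inv x (M n) \<in> mult_sub G (r n)"
proof -
  obtain N where N: "\<And>n i j. N n \<le> i \<Longrightarrow> N n \<le> j \<Longrightarrow> x i \<otimes> inv x j \<in> mult_sub G (r n)"
    using assms unfolding rho_cauchy_def by metis
  define M where "M n = (\<Sum>k\<le>n. N k)" for n
  have N_le_M: "N n \<le> M n" for n
    unfolding M_def by (rule member_le_sum) auto
  have "M n \<le> M (Suc n)" for n
    unfolding M_def by simp
  moreover have "x i \<otimes> inv x (M n) \<in> mult_sub G (r n)" if "M n \<le> i" for n i
    using N N_le_M that by (meson order_trans order_refl)
  ultimately show ?thesis by (rule that)
qed

lemma rho_complete_if_chain_solvable: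
  assumes solvable: "rho_chain_solvable G r"
  shows "rho_complete G r"
  unfolding rho_complete_def
proof (intro allI impI, elim conjE)
  fix x :: "nat \<Rightarrow> 'g"
  assume x_closed: "\<forall>i. x i \<in> carrier G" and cauchy: "rho_cauchy G r x"
  obtain M where M_mono: "\<And>n. M n \<le> M (Suc n)"
    and M_tail: "\<And>n i. M n \<le> i \<Longrightarrow> x i \<otimes> inv x (M n) \<in> mult_sub G (r n)"
    using rho_cauchy_fast_subseq[OF cauchy] by blast
  define y where "y n = x (M n)" for n
  have y_closed: "y n \<in> carrier G" for n
    using x_closed by (simp add: y_def)
  have tail: "x i \<otimes> inv y n \<in> mult_sub G (r n)" if "M n \<le> i" for i n
    unfolding y_def using M_tail that .
  have "\<exists>a. a \<in> carrier G \<and> a [^] r n = y (Suc n) \<otimes> inv y n" for n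
    using tail[OF M_mono, of n] unfolding y_def[of "Suc n"] by (blast elim: mult_subE)
  then obtain g where g_closed: "\<And>n. g n \<in> carrier G"
    and g_pow: "\<And>n. g n [^] r n = y (Suc n) \<otimes> inv y n"
    by metis
  obtain w where w_closed: "\<And>n. w n \<in> carrier G"
    and w_eq: "\<And>n. w n = g n \<otimes> w (Suc n) [^] rho_ratio r n"
    using solvable g_closed unfolding rho_chain_solvable_def by metis
  define L where "L = y 0 \<otimes> w 0 [^] r 0"
  have L_eq: "L = y n \<otimes> w n [^] r n" for n
  proof (induction n)
    case (Suc n)
    have "y n \<otimes> w n [^] r n = y n \<otimes> g n [^] r n \<otimes> w (Suc n) [^] r (Suc n)"
      using g_closed w_closed y_closed
      by (subst w_eq) (simp add: nat_pow_distrib nat_pow_pow r_Suc_eq mult.commute[of "rho_ratio r n"] m_assoc)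
    also have "\<dots> = y (Suc n) \<otimes> w (Suc n) [^] r (Suc n)"
      using y_closed by (simp add: g_pow m_lcomm[of "y n"])
    finally show ?case using Suc by simp
  qed (simp add: L_def)
  have "rho_converges G r x L"
    unfolding rho_converges_def
  proof (intro allI exI impI)
    fix n i assume "M n \<le> i"
    then have "(x i \<otimes> inv y n) \<otimes> inv (w n [^] r n) \<in> mult_sub G (r n)"
      using w_closed by (intro mult_sub_mult mult_sub_inv tail pow_in_mult_sub)
    then show "x i \<otimes> inv L \<in> mult_sub G (r n)"
      using x_closed y_closed w_closed by (simp add: L_eq[of n] inv_mult m_assoc)
  qed
  moreover have "L \<in> carrier G"
    using y_closed w_closed by (simp add: L_def)
  ultimately show "\<exists>L\<in>carrier G. rho_converges G r x L" by blast
qed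

lemma rho_chain_solvable_if_complete:
  assumes torsion_free: "torsion_free G" and complete: "rho_complete G r"
  shows "rho_chain_solvable G r"
  unfolding rho_chain_solvable_def
proof (intro allI impI)
  fix g :: "nat \<Rightarrow> 'g" assume "\<forall>n. g n \<in> carrier G"
  then have g: "\<And>n. g n \<in> carrier G" by blast
  define S where "S N = pow_prod G g (\<lambda>j. int (r j)) N" for N
  have S_closed: "S N \<in> carrier G" for N by (simp add: S_def g)
  have S_Suc: "S (Suc N) = g N [^] r N \<otimes> S N" for N
    by (simp add: S_def pow_prod_Suc g int_pow_int)
  have S_steps: "S (Suc n) \<otimes> inv S n \<in> mult_sub G (r n)" for n
    using S_closed g by (simp add: S_Suc m_assoc pow_in_mult_sub)
  obtain L where L: "L \<in> carrier G" "rho_converges G r S L"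
    using complete[unfolded rho_complete_def, rule_format, of S]
      rho_cauchy_if_steps[OF S_closed S_steps] S_closed by blast
  have "\<exists>w. w \<in> carrier G \<and> w [^] r n = L \<otimes> inv S n" for n
    using rho_limit_tail[OF S_closed S_steps L] by (blast elim: mult_subE)
  then obtain w where w_closed: "\<And>n. w n \<in> carrier G"
    and w_pow: "\<And>n. w n [^] r n = L \<otimes> inv S n"
    by metis
  have "w n = g n \<otimes> w (Suc n) [^] rho_ratio r n" for n
  proof (rule torsion_free_pow_inj[OF torsion_free w_closed _ r_pos])
    have "(g n \<otimes> w (Suc n) [^] rho_ratio r n) [^] r n = g n [^] r n \<otimes> w (Suc n) [^] r (Suc n)"
      using g w_closed by (simp add: nat_pow_distrib nat_pow_pow r_Suc_eq mult.commute[of "rho_ratio r n"])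
    also have "\<dots> = g n [^] r n \<otimes> (L \<otimes> inv (g n [^] r n \<otimes> S n))"
      by (simp add: w_pow S_Suc)
    also have "\<dots> = L \<otimes> inv S n"
      using g L(1) S_closed by (simp add: inv_mult m_lcomm[of "g n [^] r n" L])
    finally show "w n [^] r n = (g n \<otimes> w (Suc n) [^] rho_ratio r n) [^] r n"
      by (simp add: w_pow)
  qed (use g w_closed in simp)
  then show "\<exists>w. (\<forall>n. w n \<in> carrier G) \<and> (\<forall>n. w n = g n \<otimes> w (Suc n) [^] rho_ratio r n)"
    using w_closed by blast
qed

end

section \<open>Extensions of \<open>Z\<^sub>\<rho>\<close> and the chain equations\<close>

text \<open>The coboundary of the formal product \<open>\<Prod>\<^sub>j g\<^sub>j\<^bsup>q r\<^sub>j\<^esup>\<close>. The exponents of the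
  coboundary vanish from a common level of \<open>q, q'\<close> on, so the product may be cut off at any
  such level (\<open>coord_cocycle_eq\<close>).\<close>

definition coord_cocycle :: "('g, 'b) monoid_scheme \<Rightarrow> (nat \<Rightarrow> nat) \<Rightarrow> (nat \<Rightarrow> 'g) \<Rightarrow> rat \<Rightarrow> rat \<Rightarrow> 'g" where
  "coord_cocycle G r g q q' =
     pow_prod G g (\<lambda>j. rho_coord r (q + q') j - rho_coord r q j - rho_coord r q' j)
       (SOME M. q \<in> rho_level r M \<and> q' \<in> rho_level r M)"

context rho_group
begin

context
  fixes g :: "nat \<Rightarrow> 'g"
  assumes g_closed: "\<And>j. g j \<in> carrier G"
begin

lemma coord_cocycle_eq:
  assumes "q \<in> rho_level r M" "q' \<in> rho_level r M"
  shows "coord_cocycle G r g q q' =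
    pow_prod G g (\<lambda>j. rho_coord r (q + q') j - rho_coord r q j - rho_coord r q' j) M"
proof -
  define d where "d = (\<lambda>j. rho_coord r (q + q') j - rho_coord r q j - rho_coord r q' j)"
  have vanish: "d j = 0" if "q \<in> rho_level r N" "q' \<in> rho_level r N" "N \<le> j" for N j
    using that subsetD[OF rho_level_mono[OF that(3)]] by (simp add: d_def rho_coord_add)
  define N where "N = (SOME N. q \<in> rho_level r N \<and> q' \<in> rho_level r N)"
  have "q \<in> rho_level r N \<and> q' \<in> rho_level r N"
    unfolding N_def using assms by (rule someI[where x = M, OF conjI])
  then have "pow_prod G g d N = pow_prod G g d (max M N)"
    by (intro pow_prod_stable[OF g_closed, symmetric] vanish) auto
  also have "\<dots> = pow_prod G g d M"
    using assms by (intro pow_prod_stable[OF g_closed] vanish) auto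
  finally show ?thesis
    by (simp add: coord_cocycle_def d_def N_def[symmetric])
qed

lemma pow_prod_coord_add:
  assumes "q \<in> rho_level r M" "q' \<in> rho_level r M"
  shows "pow_prod G g (rho_coord r (q + q')) M =
    pow_prod G g (rho_coord r q) M \<otimes> pow_prod G g (rho_coord r q') M \<otimes> coord_cocycle G r g q q'"
proof -
  have "pow_prod G g (rho_coord r (q + q')) M = pow_prod G g (\<lambda>j. rho_coord r q j + rho_coord r q' j +
        (rho_coord r (q + q') j - rho_coord r q j - rho_coord r q' j)) M"
    by simp
  then show ?thesis
    by (simp only: coord_cocycle_eq[OF assms] pow_prod_add g_closed)
qed

lemma coord_cocycle_symmetric: "symmetric_cocycle G (Zrho r) (coord_cocycle G r g)"
proof (intro symmetric_cocycle.intro symmetric_cocycle_axioms.intro)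
  show "comm_group G" by (rule comm_group_axioms)
  show "comm_group (Zrho r)" by (rule Zrho_comm_group)
next
  fix q q' q''
  assume qs: "q \<in> carrier (Zrho r)" "q' \<in> carrier (Zrho r)" "q'' \<in> carrier (Zrho r)"
  obtain M where "{q, q', q''} \<subseteq> rho_level r M"
    by (rule common_level[of "{q, q', q''}"]) (use qs in auto)
  then have M: "q \<in> rho_level r M" "q' \<in> rho_level r M" "q'' \<in> rho_level r M"
    "q + q' \<in> rho_level r M" "q' + q'' \<in> rho_level r M"
    by (auto intro: rho_level_add)
  show "coord_cocycle G r g q q' = coord_cocycle G r g q' q"
    using M by (simp add: coord_cocycle_eq diff_diff_eq add.commute)
  show "coord_cocycle G r g q q' \<otimes> coord_cocycle G r g (q \<otimes>\<^bsub>Zrho r\<^esub> q') q'' =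
      coord_cocycle G r g q' q'' \<otimes> coord_cocycle G r g q (q' \<otimes>\<^bsub>Zrho r\<^esub> q'')"
    using M by (simp add: coord_cocycle_eq pow_prod_add[symmetric] g_closed add.assoc algebra_simps)
qed (simp_all add: coord_cocycle_def g_closed pow_prod_zero)

end

end

locale Zrho_extension = rho_group r G + E: comm_group E
  for r :: "nat \<Rightarrow> nat" and G :: "('g, 'b) monoid_scheme" (structure)
    and E :: "('e, 'c) monoid_scheme" +
  fixes i :: "'g \<Rightarrow> 'e" and p :: "'e \<Rightarrow> rat"
  assumes i_hom: "i \<in> hom G E" and i_inj: "inj_on i (carrier G)"
    and p_hom: "p \<in> hom E (Zrho r)" and p_surj: "p ` carrier E = carrier (Zrho r)"
    and exact: "i ` carrier G = kernel E (Zrho r) p"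
begin

sublocale i: group_hom G E i
  by (intro group_hom.intro group_hom_axioms.intro i_hom is_group E.is_group)

sublocale p: group_hom E "Zrho r" p
  by (intro group_hom.intro group_hom_axioms.intro p_hom E.is_group Zrho.is_group)

lemma p_i [simp]: "a \<in> carrier G \<Longrightarrow> p (i a) = 0"
  using exact by (auto simp: kernel_def)

lemma kernel_preimage:
  assumes "x \<in> carrier E" "p x = 0"
  obtains a where "a \<in> carrier G" "i a = x"
proof -
  have "x \<in> i ` carrier G" using assms exact by (simp add: kernel_def)
  then show ?thesis using that by blast
qed

lemma chain_solution_if_split:
  assumes s_hom: "s \<in> hom (Zrho r) E" and s_section: "\<And>q. q \<in> carrier (Zrho r) \<Longrightarrow> p (s q) = q"
    and y_closed: "\<And>n. y n \<in> carrier E" and p_y: "\<And>n. p (y n) = 1 / of_nat (r n)"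
    and g_closed: "\<And>n. g n \<in> carrier G"
    and y_step: "\<And>n. y (Suc n) [^]\<^bsub>E\<^esub> rho_ratio r n = i (g n) \<otimes>\<^bsub>E\<^esub> y n"
  shows "\<exists>w. (\<forall>n. w n \<in> carrier G) \<and> (\<forall>n. w n = g n \<otimes> w (Suc n) [^] rho_ratio r n)"
proof -
  interpret s: group_hom "Zrho r" E s
    by (intro group_hom.intro group_hom_axioms.intro s_hom E.is_group Zrho.is_group)
  define e :: "nat \<Rightarrow> rat" where "e n = 1 / of_nat (r n)" for n
  have e_closed: "e n \<in> carrier (Zrho r)" for n
    by (simp add: e_def inverse_r_in_Zrho)
  have "\<exists>a. a \<in> carrier G \<and> i a = s (e n) \<otimes>\<^bsub>E\<^esub> inv\<^bsub>E\<^esub> y n" for n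
  proof -
    have "p (s (e n) \<otimes>\<^bsub>E\<^esub> inv\<^bsub>E\<^esub> y n) = 0"
      using y_closed e_closed by (simp add: s_section p_y Zrho_inv e_def[symmetric])
    then show ?thesis using y_closed e_closed by (metis kernel_preimage E.m_closed E.inv_closed s.hom_closed)
  qed
  then obtain w where w_closed: "\<And>n. w n \<in> carrier G"
    and w_eq: "\<And>n. i (w n) = s (e n) \<otimes>\<^bsub>E\<^esub> inv\<^bsub>E\<^esub> y n"
    by metis
  have s_e: "s (e n) = i (w n) \<otimes>\<^bsub>E\<^esub> y n" for n
    using y_closed e_closed by (simp add: w_eq E.m_assoc)
  have "i (w n) = i (g n \<otimes> w (Suc n) [^] rho_ratio r n)" for n
  proof -
    have "i (w n) \<otimes>\<^bsub>E\<^esub> y n = s (e (Suc n) [^]\<^bsub>Zrho r\<^esub> rho_ratio r n)"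
      by (simp add: s_e[symmetric] Zrho_nat_pow e_def ratio_div_r_Suc)
    also have "\<dots> = (i (w (Suc n)) \<otimes>\<^bsub>E\<^esub> y (Suc n)) [^]\<^bsub>E\<^esub> rho_ratio r n"
      by (simp add: s.hom_nat_pow e_closed s_e)
    also have "\<dots> = i (g n \<otimes> w (Suc n) [^] rho_ratio r n) \<otimes>\<^bsub>E\<^esub> y n"
      using y_closed w_closed g_closed
      by (simp add: E.nat_pow_distrib y_step i.hom_nat_pow E.m_ac)
    finally show ?thesis
      using y_closed w_closed g_closed by simp
  qed
  then have "w n = g n \<otimes> w (Suc n) [^] rho_ratio r n" for n
    using w_closed g_closed inj_onD[OF i_inj] by simp
  then show ?thesis using w_closed by blast
qed

lemma generator_lifts:
  obtains y g where "\<And>n. y n \<in> carrier E" "\<And>n. p (y n) = 1 / of_nat (r n)"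
    "\<And>n. g n \<in> carrier G" "\<And>n. y (Suc n) [^]\<^bsub>E\<^esub> rho_ratio r n = i (g n) \<otimes>\<^bsub>E\<^esub> y n"
proof -
  have "\<exists>x. x \<in> carrier E \<and> p x = 1 / of_nat (r n)" for n
    using p_surj inverse_r_in_Zrho by (metis imageE)
  then obtain y where y_closed: "\<And>n. y n \<in> carrier E" and p_y: "\<And>n. p (y n) = 1 / of_nat (r n)"
    by metis
  have "\<exists>a. a \<in> carrier G \<and> i a = y (Suc n) [^]\<^bsub>E\<^esub> rho_ratio r n \<otimes>\<^bsub>E\<^esub> inv\<^bsub>E\<^esub> y n" for n
  proof -
    have "p (y (Suc n) [^]\<^bsub>E\<^esub> rho_ratio r n \<otimes>\<^bsub>E\<^esub> inv\<^bsub>E\<^esub> y n) = 0"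
      using y_closed by (simp add: p.hom_nat_pow p_y Zrho_nat_pow Zrho_inv inverse_r_in_Zrho
          ratio_div_r_Suc)
    then show ?thesis using y_closed by (metis kernel_preimage E.m_closed E.inv_closed E.nat_pow_closed)
  qed
  then obtain g where g_closed: "\<And>n. g n \<in> carrier G"
    and g_eq: "\<And>n. i (g n) = y (Suc n) [^]\<^bsub>E\<^esub> rho_ratio r n \<otimes>\<^bsub>E\<^esub> inv\<^bsub>E\<^esub> y n"
    by metis
  have "y (Suc n) [^]\<^bsub>E\<^esub> rho_ratio r n = i (g n) \<otimes>\<^bsub>E\<^esub> y n" for n
    using y_closed by (simp add: g_eq E.m_assoc)
  with y_closed p_y g_closed show ?thesis by (rule that)
qed

lemma splitting_if_chain_solvable:
  assumes solvable: "rho_chain_solvable G r"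
  shows "\<exists>s \<in> hom (Zrho r) E. \<forall>q \<in> carrier (Zrho r). p (s q) = q"
proof -
  obtain y g where y_closed: "\<And>n. y n \<in> carrier E" and p_y: "\<And>n. p (y n) = 1 / of_nat (r n)"
    and g_closed: "\<And>n. g n \<in> carrier G"
    and y_step: "\<And>n. y (Suc n) [^]\<^bsub>E\<^esub> rho_ratio r n = i (g n) \<otimes>\<^bsub>E\<^esub> y n"
    using generator_lifts by blast
  obtain w where w_closed: "\<And>n. w n \<in> carrier G"
    and w_eq: "\<And>n. w n = g n \<otimes> w (Suc n) [^] rho_ratio r n"
    using solvable g_closed unfolding rho_chain_solvable_def by metis
  define z where "z n = i (w n) \<otimes>\<^bsub>E\<^esub> y n" for n
  have z_closed: "z n \<in> carrier E" for n
    using w_closed y_closed by (simp add: z_def)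
  have z_compat: "z (Suc n) [^]\<^bsub>E\<^esub> rho_ratio r n = z n" for n
    using y_closed w_closed g_closed
    by (simp add: z_def E.nat_pow_distrib y_step i.hom_nat_pow E.m_ac w_eq[of n])
  obtain s where s_hom: "s \<in> hom (Zrho r) E"
    and s_eq: "\<And>M q. q \<in> rho_level r M \<Longrightarrow> s q = z M [^]\<^bsub>E\<^esub> rho_coord r q M"
    using Zrho_hom_of_compatible[OF E.is_group z_closed z_compat] by blast
  have "p (s q) = q" if q: "q \<in> carrier (Zrho r)" for q
  proof -
    obtain M where M: "q \<in> rho_level r M" using q unfolding carrier_Zrho by blast
    have "p (s q) = (1 / of_nat (r M)) [^]\<^bsub>Zrho r\<^esub> rho_coord r q M"
      using w_closed y_closed by (simp add: s_eq[OF M] p.hom_int_pow z_closed z_def p_y)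
    also have "\<dots> = q"
      using rho_coord_eq[OF M] r_pos[of M] by (simp add: Zrho_int_pow inverse_r_in_Zrho)
    finally show ?thesis .
  qed
  then show ?thesis using s_hom by blast
qed

end

context rho_group
begin

lemma cocycle_ext_generator_lifts:
  assumes g_closed: "\<And>j. g j \<in> carrier G"
  defines "E \<equiv> cocycle_ext G (Zrho r) (coord_cocycle G r g)"
  shows "\<exists>y. (\<forall>n. y n \<in> carrier E) \<and> (\<forall>n. snd (y n) = 1 / of_nat (r n)) \<and>
    (\<forall>n. y (Suc n) [^]\<^bsub>E\<^esub> rho_ratio r n = (g n, 0) \<otimes>\<^bsub>E\<^esub> y n)"
proof -
  interpret symmetric_cocycle G "Zrho r" "coord_cocycle G r g"
    by (rule coord_cocycle_symmetric[OF g_closed])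
  define P where "P M q = pow_prod G g (rho_coord r q) M" for M q
  have P_closed: "P M q \<in> carrier G" for M q
    by (simp add: P_def g_closed)
  \<comment> \<open>on one level the cocycle is the coboundary of \<open>P M\<close>, so \<open>q \<mapsto> (P M q, q)\<close> is additive there\<close>
  have section_pow: "(P M q, q) [^]\<^bsub>E\<^esub> k = (P M (of_nat k * q), of_nat k * q)"
    if q: "q \<in> rho_level r M" for M q k
  proof (induction k)
    case 0
    then show ?case by (simp add: E_def cocycle_ext_def P_def pow_prod_zero g_closed)
  next
    case (Suc k)
    have "P M (q + of_nat k * q) = P M (of_nat k * q) \<otimes> P M q \<otimes> coord_cocycle G r g (of_nat k * q) q"
      unfolding P_def add.commute[of q] by (rule pow_prod_coord_add[OF g_closed rho_level_of_nat_mult[OF q] q])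
    then show ?case
      using Suc by (simp add: E_def cocycle_ext_def distrib_right)
  qed
  define y where "y n = (P n (1 / of_nat (r n)), 1 / of_nat (r n) :: rat)" for n
  have "y n \<in> carrier E" for n
    by (simp add: y_def E_def cocycle_ext_def P_closed inverse_r_in_Zrho)
  moreover have "y (Suc n) [^]\<^bsub>E\<^esub> rho_ratio r n = (g n, 0) \<otimes>\<^bsub>E\<^esub> y n" for n
  proof -
    have "y (Suc n) [^]\<^bsub>E\<^esub> rho_ratio r n = (P (Suc n) (1 / of_nat (r n)), 1 / of_nat (r n))"
      unfolding y_def by (simp add: section_pow inverse_r_in_rho_level ratio_div_r_Suc)
    also have "\<dots> = (g n \<otimes> P n (1 / of_nat (r n)), 1 / of_nat (r n))"
      by (simp add: P_def pow_prod_Suc g_closed rho_coord_inverse_r)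
    also have "\<dots> = (g n, 0) \<otimes>\<^bsub>E\<^esub> y n"
      using cocycle_one[OF inverse_r_in_Zrho[of r n]]
      by (simp add: y_def E_def cocycle_ext_def g_closed P_closed)
    finally show ?thesis .
  qed
  moreover have "snd (y n) = 1 / of_nat (r n)" for n
    by (simp add: y_def)
  ultimately show ?thesis by blast
qed

lemma rho_chain_solvable_if_ext_vanishes:
  assumes ext_vanishes: "ext_vanishes (Zrho r) G"
  shows "rho_chain_solvable G r"
  unfolding rho_chain_solvable_def
proof (intro allI impI)
  fix g :: "nat \<Rightarrow> 'g" assume "\<forall>n. g n \<in> carrier G"
  then have g_closed: "\<And>n. g n \<in> carrier G" by blast
  define E where "E = cocycle_ext G (Zrho r) (coord_cocycle G r g)"
  interpret symmetric_cocycle G "Zrho r" "coord_cocycle G r g"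
    by (rule coord_cocycle_symmetric[OF g_closed])
  have E: "comm_group E" "(\<lambda>a. (a, 0)) \<in> hom G E" "inj_on (\<lambda>a. (a, 0)) (carrier G)"
    "snd \<in> hom E (Zrho r)" "snd ` carrier E = carrier (Zrho r)"
    "(\<lambda>a. (a, 0)) ` carrier G = kernel E (Zrho r) snd"
    using cocycle_ext_comm_group cocycle_ext_extension by (simp_all add: E_def inj_on_def)
  interpret ext: Zrho_extension r G E "\<lambda>a. (a, 0)" snd
    by (intro Zrho_extension.intro Zrho_extension_axioms.intro rho_group_axioms E)
  obtain s where s: "s \<in> hom (Zrho r) E" "\<And>q. q \<in> carrier (Zrho r) \<Longrightarrow> snd (s q) = q"
    using ext_vanishes[unfolded ext_vanishes_def, rule_format, of E "\<lambda>a. (a, 0)" snd] E by blast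
  obtain y where y: "\<And>n. y n \<in> carrier E" "\<And>n. snd (y n) = 1 / of_nat (r n)"
    "\<And>n. y (Suc n) [^]\<^bsub>E\<^esub> rho_ratio r n = (g n, 0) \<otimes>\<^bsub>E\<^esub> y n"
    using cocycle_ext_generator_lifts[of g, OF g_closed] unfolding E_def by blast
  show "\<exists>w. (\<forall>n. w n \<in> carrier G) \<and> (\<forall>n. w n = g n \<otimes> w (Suc n) [^] rho_ratio r n)"
    by (rule ext.chain_solution_if_split[OF s y(1,2) g_closed y(3)])
qed

lemma ext_vanishes_if_chain_solvable:
  assumes solvable: "rho_chain_solvable G r"
  shows "ext_vanishes (Zrho r) G"
  unfolding ext_vanishes_def
proof (intro allI impI, elim conjE)
  fix E :: "('g \<times> rat) monoid" and i p
  assume "comm_group E" "i \<in> hom G E" "inj_on i (carrier G)" "p \<in> hom E (Zrho r)"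
    "p ` carrier E = carrier (Zrho r)" "i ` carrier G = kernel E (Zrho r) p"
  then interpret ext: Zrho_extension r G E i p
    by (intro Zrho_extension.intro Zrho_extension_axioms.intro rho_group_axioms)
  show "\<exists>s\<in>hom (Zrho r) E. \<forall>a\<in>carrier (Zrho r). p (s a) = a"
    by (rule ext.splitting_if_chain_solvable[OF solvable])
qed

end

theorem corollary4p1:
  fixes r :: "nat \<Rightarrow> nat" and G :: "('g, 'b) monoid_scheme"
  assumes "\<forall>n. r n > 0" and "r 0 = 1" and "\<forall>n. r n dvd r (Suc n)"
    and "comm_group G" and "torsion_free G"
    and "(\<Inter>n. mult_sub G (r n)) = {\<one>\<^bsub>G\<^esub>}"
  shows "ext_vanishes (Zrho r) G \<longleftrightarrow> rho_complete G r"
proof -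
  interpret rho_group r G
    using assms(1,3,4) by (intro rho_group.intro divisor_chain.intro) simp_all
  show ?thesis
    using rho_chain_solvable_if_ext_vanishes rho_complete_if_chain_solvable
      rho_chain_solvable_if_complete[OF assms(5)] ext_vanishes_if_chain_solvable
    by blast
qed

end
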